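(* Let $d>0$ and $0<p<1$. Any sequence of moves that transforms the distribution $\{(0,1)\}$ into a distribution $\nu$ with $\nu\{|x|\ge d\}\ge p$ contains at least $(3p)^{3/2}d^3$ moves.
   Context: A distribution is a finite set $\{(x_1,m_1),\dots,(x_k,m_k)\}$, $m_i>0$; $\mu(A)=\sum_{x_i\in A}m_i$; $M_j[\mu]=\sum_im_ix_i^j$. A move $v=([a,b],\delta)$ has $b-a=1$ and $\delta$ a signed distribution on $[a,b]$ with $M_0[\delta]=M_1[\delta]=0$; it applies to $\mu$ if $\mu+\delta$ is a distribution, and $v\mu=\mu+\delta$. A sequence of moves is applied successively. *)

theory Defs
  imports Main "HOL-Analysis.Analysis"
begin

text \<open>A (signed) distribution is represented as a finitely supported function
  real => real giving the mass at each point; a distribution has nonnegative masses.\<close>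

definition supp :: "(real \<Rightarrow> real) \<Rightarrow> real set" where
  "supp \<mu> = {x. \<mu> x \<noteq> 0}"

definition signed_distribution :: "(real \<Rightarrow> real) \<Rightarrow> bool" where
  "signed_distribution \<delta> \<longleftrightarrow> finite (supp \<delta>)"

definition distribution :: "(real \<Rightarrow> real) \<Rightarrow> bool" where
  "distribution \<mu> \<longleftrightarrow> finite (supp \<mu>) \<and> (\<forall>x. \<mu> x \<ge> 0)"

definition mass :: "(real \<Rightarrow> real) \<Rightarrow> real set \<Rightarrow> real" where
  "mass \<mu> A = (\<Sum>x \<in> supp \<mu> \<inter> A. \<mu> x)"

definition moment :: "nat \<Rightarrow> (real \<Rightarrow> real) \<Rightarrow> real" where
  "moment j \<mu> = (\<Sum>x \<in> supp \<mu>. \<mu> x * x ^ j)"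

text \<open>A move ([a,b],delta) is encoded as the pair (a, delta); b = a + 1.\<close>
type_synonym move = "real \<times> (real \<Rightarrow> real)"

definition is_move :: "move \<Rightarrow> bool" where
  "is_move v \<longleftrightarrow> (case v of (a, \<delta>) \<Rightarrow>
      signed_distribution \<delta> \<and> supp \<delta> \<subseteq> {a..a+1} \<and>
      moment 0 \<delta> = 0 \<and> moment 1 \<delta> = 0)"

definition move_applies :: "move \<Rightarrow> (real \<Rightarrow> real) \<Rightarrow> bool" where
  "move_applies v \<mu> \<longleftrightarrow> distribution (\<lambda>x. \<mu> x + snd v x)"

definition apply_move :: "move \<Rightarrow> (real \<Rightarrow> real) \<Rightarrow> (real \<Rightarrow> real)" where
  "apply_move v \<mu> = (\<lambda>x. \<mu> x + snd v x)"

inductive transforms :: "move list \<Rightarrow> (real \<Rightarrow> real) \<Rightarrow> (real \<Rightarrow> real) \<Rightarrow> bool" where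
  Nil: "transforms [] \<mu> \<mu>"
| Cons: "is_move v \<Longrightarrow> move_applies v \<mu> \<Longrightarrow> transforms vs (apply_move v \<mu>) \<nu>
          \<Longrightarrow> transforms (v # vs) \<mu> \<nu>"

definition unit_at_zero :: "real \<Rightarrow> real" where
  "unit_at_zero = (\<lambda>x. if x = 0 then 1 else 0)"

end

theory Submission
  imports Defs
begin

(* Every move on [a, a+1] is dominated in convex order by the "sweep" that
   pushes all mass strictly inside (a, a+1) to the two endpoints, preserving mass and mean.
   Hence the final distribution nu is dominated by the distribution E obtained from the unit
   mass at 0 by the sweeps at the same intervals, so E X^2 under nu is at most M = E X^2
   under E. For sweeps two quantities are tracked: the second moment M and the spread
   S = E|X - Y|. A single sweep satisfies 6 (gain of M)^2 <= gain of S (an L2 argument for the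
   Brownian-bridge kernel min s t - s t), so after n sweeps 6 M^2 <= n S; on the other hand
   S^2 <= 4/3 M for every probability distribution. Together n >= 3 sqrt 3 M^(3/2), and
   Chebyshev's bound M >= p d^2 gives n >= (3p)^(3/2) d^3.
   The file proves, in order: the kernel inequality (via integrals on [0,1]); the Gini
   mean-difference bound; expectations and sweeps; domination of moves by sweeps; the growth
   of M and S under sweeps; and finally the main theorem. *)

lemma indicator_Icc_has_integral:
  fixes c :: real assumes "0 \<le> c" "c \<le> 1"
  shows "(indicator {0..c} has_integral c) {0..1}"
proof -
  have "((\<lambda>x. 1::real) has_integral c) {0..c}"
    using has_integral_const_real[of "1::real" 0 c] assms by simp
  then have "((\<lambda>x. if x \<in> {0..c} then 1::real else 0) has_integral c) {0..1}"
    using assms by (subst has_integral_restrict) auto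
  moreover have "indicator {0..c} = (\<lambda>x::real. if x \<in> {0..c} then 1::real else 0)"
    by (auto simp: indicator_def)
  ultimately show ?thesis by simp
qed

(* The integral of the centred linear function h(u) = 1/2 - u over [0,c]. *)
lemma centred_has_integral:
  fixes c :: real assumes "0 \<le> c"
  shows "((\<lambda>u. 1/2 - u) has_integral c * (1 - c) / 2) {0..c}"
proof -
  have "((\<lambda>u. 1/2 - u) has_integral (c/2 - c^2/2) - (0/2 - 0^2/2)) {0..c}"
    by (rule fundamental_theorem_of_calculus)
       (use assms in \<open>auto intro!: derivative_eq_intros
          simp: has_real_derivative_iff_has_vector_derivative[symmetric]\<close>)
  then show ?thesis by (simp add: field_simps power2_eq_square)
qed

lemma indicator_times_centred_has_integral:
  fixes c :: real assumes "0 \<le> c" "c \<le> 1"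
  shows "((\<lambda>u. indicator {0..c} u * (1/2 - u)) has_integral c * (1 - c) / 2) {0..1}"
proof -
  have "((\<lambda>u. if u \<in> {0..c} then 1/2 - u else 0) has_integral c * (1 - c) / 2) {0..1}"
    using assms centred_has_integral by (subst has_integral_restrict) auto
  then show ?thesis by (rule has_integral_eq[rotated]) (simp add: indicator_def)
qed

lemma centred_square_has_integral:
  "((\<lambda>u::real. (1/2 - u) * (1/2 - u)) has_integral 1/12) {0..1}"
proof -
  define F where "F u = u/4 - u^2/2 + u^3/3" for u :: real
  have "((\<lambda>u::real. (1/2 - u) * (1/2 - u)) has_integral F 1 - F 0) {0..1}"
    unfolding F_def
    by (rule fundamental_theorem_of_calculus)
       (auto intro!: derivative_eq_intros
          simp: has_real_derivative_iff_has_vector_derivative[symmetric] algebra_simps power2_eq_square)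
  then show ?thesis by (simp add: F_def)
qed

lemma centred_indicators_has_integral:
  fixes s t :: real assumes "0 \<le> s" "s \<le> 1" "0 \<le> t" "t \<le> 1"
  shows "((\<lambda>u. (indicator {0..s} u - s) * (indicator {0..t} u - t))
           has_integral min s t - s * t) {0..1}"
proof -
  have expand: "(\<lambda>u::real. (indicator {0..s} u - s) * (indicator {0..t} u - t)) =
     (\<lambda>u. indicator {0..min s t} u - t * indicator {0..s} u - s * indicator {0..t} u + s * t)"
    by (auto simp: indicator_def algebra_simps)
  have const: "((\<lambda>u::real. s * t) has_integral s * t) {0..1}"
    using has_integral_const_real[of "s * t" 0 1] by simp
  have "((\<lambda>u. indicator {0..min s t} u - t * indicator {0..s} u - s * indicator {0..t} u + s * t)
      has_integral min s t - t * s - s * t + s * t) {0..1}"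
    using assms
    by (intro has_integral_add has_integral_diff has_integral_mult_right
          indicator_Icc_has_integral const) auto
  then show ?thesis unfolding expand by (simp add: algebra_simps)
qed

lemma centred_indicator_times_centred_has_integral:
  fixes s :: real assumes "0 \<le> s" "s \<le> 1"
  shows "((\<lambda>u. (indicator {0..s} u - s) * (1/2 - u)) has_integral s * (1 - s) / 2) {0..1}"
proof -
  have "((\<lambda>u. indicator {0..s} u * (1/2 - u) - s * (1/2 - u)) has_integral
      s * (1 - s) / 2 - s * (1 * (1 - 1) / 2)) {0..1}"
    using assms
    by (intro has_integral_diff has_integral_mult_right
          indicator_times_centred_has_integral centred_has_integral) auto
  then show ?thesis by (simp add: algebra_simps)
qed

(* With F = sum w_i (1_[0,s_i] - s_i) the right side is the integral of F^2, and the sum on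
   the left is twice the integral of F h; the bound is the integral of (F - 6 Q h)^2 >= 0. *)
lemma min_kernel_quadratic_form_bound:
  fixes s w :: "'a \<Rightarrow> real"
  assumes fin: "finite I" and s_range: "\<And>i. i \<in> I \<Longrightarrow> 0 \<le> s i \<and> s i \<le> 1"
  shows "3 * (\<Sum>i\<in>I. w i * (s i * (1 - s i)))\<^sup>2
           \<le> (\<Sum>i\<in>I. \<Sum>j\<in>I. w i * w j * (min (s i) (s j) - s i * s j))"
proof -
  define Q where "Q = (\<Sum>i\<in>I. w i * (s i * (1 - s i)))"
  define D where "D = (\<Sum>i\<in>I. \<Sum>j\<in>I. w i * w j * (min (s i) (s j) - s i * s j))"
  define f where "f i u = indicator {0..s i} u - s i" for i u
  define F where "F u = (\<Sum>i\<in>I. w i * f i u)" for u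
  define c where "c = 6 * Q"
  have FF: "((\<lambda>u. F u * F u) has_integral D) {0..1}"
  proof -
    have "F u * F u = (\<Sum>i\<in>I. \<Sum>j\<in>I. w i * w j * (f i u * f j u))" for u
      by (simp add: F_def sum_product algebra_simps)
    moreover have "((\<lambda>u. \<Sum>i\<in>I. \<Sum>j\<in>I. w i * w j * (f i u * f j u)) has_integral D) {0..1}"
      unfolding D_def f_def using s_range
      by (intro has_integral_sum fin has_integral_mult_right centred_indicators_has_integral) auto
    ultimately show ?thesis by simp
  qed
  have Fh: "((\<lambda>u. F u * (1/2 - u)) has_integral Q / 2) {0..1}"
  proof -
    have "F u * (1/2 - u) = (\<Sum>i\<in>I. w i * (f i u * (1/2 - u)))" for u
      by (simp add: F_def sum_distrib_right mult.assoc)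
    moreover have "((\<lambda>u. \<Sum>i\<in>I. w i * (f i u * (1/2 - u))) has_integral
        (\<Sum>i\<in>I. w i * (s i * (1 - s i) / 2))) {0..1}"
      unfolding f_def using s_range
      by (intro has_integral_sum fin has_integral_mult_right
            centred_indicator_times_centred_has_integral) auto
    moreover have "(\<Sum>i\<in>I. w i * (s i * (1 - s i) / 2)) = Q / 2"
      by (simp add: Q_def sum_divide_distrib)
    ultimately show ?thesis by (simp only:)
  qed
  have "((\<lambda>u. (F u - c * (1/2 - u))\<^sup>2) has_integral D - c * Q + c\<^sup>2 / 12) {0..1}"
  proof -
    have "(F u - c * (1/2 - u))\<^sup>2
        = F u * F u + (-2 * c) * (F u * (1/2 - u)) + c\<^sup>2 * ((1/2 - u) * (1/2 - u))" for u
      by (simp add: power2_eq_square algebra_simps)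
    moreover have "((\<lambda>u. F u * F u + (-2 * c) * (F u * (1/2 - u)) + c\<^sup>2 * ((1/2 - u) * (1/2 - u)))
        has_integral D + (-2 * c) * (Q / 2) + c\<^sup>2 * (1/12)) {0..1}"
      by (intro has_integral_add has_integral_mult_right FF Fh centred_square_has_integral)
    ultimately show ?thesis by simp
  qed
  then have "0 \<le> D - c * Q + c\<^sup>2 / 12"
    by (rule has_integral_nonneg) simp
  then show ?thesis
    by (simp add: Q_def[symmetric] D_def[symmetric] c_def power2_eq_square)
qed

definition weight_below :: "real set \<Rightarrow> (real \<Rightarrow> real) \<Rightarrow> real \<Rightarrow> real" where
  "weight_below A w x = (\<Sum>y\<in>{y\<in>A. y < x}. w y)"

definition weight_above :: "real set \<Rightarrow> (real \<Rightarrow> real) \<Rightarrow> real \<Rightarrow> real" where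
  "weight_above A w x = (\<Sum>y\<in>{y\<in>A. x < y}. w y)"

lemma weight_below_above_total:
  assumes "finite A" "x \<in> A"
  shows "weight_below A w x + w x + weight_above A w x = sum w A"
proof -
  have "sum w A = (\<Sum>y\<in>A. (if y < x then w y else 0) + (if x < y then w y else 0)
                          + (if y = x then w y else 0))"
    by (rule sum.cong) auto
  also have "\<dots> = weight_below A w x + weight_above A w x + w x"
    using assms by (simp add: weight_below_def weight_above_def sum.distrib sum.inter_filter)
  finally show ?thesis by simp
qed

lemma telescoping_sorted:
  fixes \<phi> w :: "real \<Rightarrow> real"
  assumes "finite A"
  shows "(\<Sum>x\<in>A. \<phi> (weight_below A w x + w x) - \<phi> (weight_below A w x)) = \<phi> (sum w A) - \<phi> 0"
  using assms
proof (induction A rule: finite_linorder_max_induct)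
  case empty
  then show ?case by simp
next
  case (insert b A)
  have "b \<notin> A" using insert by auto
  have below_old: "weight_below (insert b A) w x = weight_below A w x" if "x \<in> A" for x
    using insert that unfolding weight_below_def by (intro sum.cong) auto
  have below_new: "weight_below (insert b A) w b = sum w A"
    unfolding weight_below_def using insert by (intro sum.cong) auto
  have "(\<Sum>x\<in>insert b A. \<phi> (weight_below (insert b A) w x + w x) - \<phi> (weight_below (insert b A) w x))
      = (\<phi> (sum w A + w b) - \<phi> (sum w A))
        + (\<Sum>x\<in>A. \<phi> (weight_below A w x + w x) - \<phi> (weight_below A w x))"
    using insert.hyps(1) \<open>b \<notin> A\<close> by (simp add: below_old below_new)
  also have "\<dots> = \<phi> (sum w (insert b A)) - \<phi> 0"
    using insert \<open>b \<notin> A\<close> by (simp add: add.commute)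
  finally show ?case .
qed

(* For probability weights, the weighted variance of the (signed) rank statistic
   L - U is at most 1/3; this is the discrete analogue of the variance of 2U - 1 for U uniform.
   Proof: 6 w (L - U)^2 is dominated by the increment of (2z - 1)^3 across the atom. *)
lemma rank_variance_bound:
  assumes fin: "finite A" and nonneg: "\<And>x. x \<in> A \<Longrightarrow> 0 \<le> w x" and total: "sum w A = 1"
  shows "(\<Sum>x\<in>A. w x * (weight_below A w x - weight_above A w x)\<^sup>2) \<le> 1/3"
proof -
  define \<phi> where "\<phi> z = (2 * z - 1) ^ 3" for z :: real
  have "(\<Sum>x\<in>A. 6 * (w x * (weight_below A w x - weight_above A w x)\<^sup>2))
      \<le> (\<Sum>x\<in>A. \<phi> (weight_below A w x + w x) - \<phi> (weight_below A w x))"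
  proof (rule sum_mono)
    fix x assume x: "x \<in> A"
    have above: "weight_above A w x = 1 - weight_below A w x - w x"
      using weight_below_above_total[OF fin x, of w] total by simp
    have "\<phi> (weight_below A w x + w x) - \<phi> (weight_below A w x)
        = 6 * (w x * (weight_below A w x - weight_above A w x)\<^sup>2) + 2 * w x ^ 3"
      unfolding \<phi>_def above by (simp add: power3_eq_cube power2_eq_square algebra_simps)
    with nonneg[OF x] show "6 * (w x * (weight_below A w x - weight_above A w x)\<^sup>2)
        \<le> \<phi> (weight_below A w x + w x) - \<phi> (weight_below A w x)" by simp
  qed
  also have "\<dots> = 2"
    using telescoping_sorted[OF fin, of \<phi> w] total by (simp add: \<phi>_def)
  finally show ?thesis by (simp add: sum_distrib_left[symmetric])
qed

lemma mean_difference_as_rank_sum: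
  assumes fin: "finite A"
  shows "(\<Sum>x\<in>A. \<Sum>y\<in>A. w x * w y * \<bar>x - y\<bar>)
           = 2 * (\<Sum>x\<in>A. w x * x * (weight_below A w x - weight_above A w x))"
proof -
  have rank_sgn: "(\<Sum>y\<in>A. w y * sgn (x - y)) = weight_below A w x - weight_above A w x" for x
  proof -
    have "(\<Sum>y\<in>A. w y * sgn (x - y))
        = (\<Sum>y\<in>A. (if y < x then w y else 0) - (if x < y then w y else 0))"
      by (rule sum.cong) (auto simp: sgn_if)
    then show ?thesis
      using fin by (simp add: weight_below_def weight_above_def sum_subtractf sum.inter_filter)
  qed
  define P where "P = (\<Sum>x\<in>A. \<Sum>y\<in>A. w x * w y * x * sgn (x - y))"
  define N where "N = (\<Sum>x\<in>A. \<Sum>y\<in>A. w x * w y * y * sgn (x - y))"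
  have "(\<Sum>x\<in>A. \<Sum>y\<in>A. w x * w y * \<bar>x - y\<bar>) = P - N"
    unfolding P_def N_def by (simp add: sum_subtractf[symmetric] abs_sgn algebra_simps)
  moreover have "N = - P"
    unfolding P_def N_def
    by (subst sum.swap) (auto simp: sum_negf[symmetric] sgn_if intro!: sum.cong)
  moreover have "P = (\<Sum>x\<in>A. w x * x * (weight_below A w x - weight_above A w x))"
    unfolding P_def by (simp add: rank_sgn[symmetric] sum_distrib_left algebra_simps)
  ultimately show ?thesis by simp
qed

lemma weighted_cauchy_schwarz:
  fixes f g w :: "'a \<Rightarrow> real"
  assumes "\<And>x. x \<in> A \<Longrightarrow> 0 \<le> w x"
  shows "(\<Sum>x\<in>A. w x * f x * g x)\<^sup>2 \<le> (\<Sum>x\<in>A. w x * (f x)\<^sup>2) * (\<Sum>x\<in>A. w x * (g x)\<^sup>2)"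
proof -
  have "(\<Sum>x\<in>A. (sqrt (w x) * f x) * (sqrt (w x) * g x))\<^sup>2
      \<le> (\<Sum>x\<in>A. (sqrt (w x) * f x)\<^sup>2) * (\<Sum>x\<in>A. (sqrt (w x) * g x)\<^sup>2)"
    by (rule Cauchy_Schwarz_ineq_sum)
  moreover have "(sqrt (w x) * f x) * (sqrt (w x) * g x) = w x * f x * g x"
    and "(sqrt (w x) * f x)\<^sup>2 = w x * (f x)\<^sup>2" and "(sqrt (w x) * g x)\<^sup>2 = w x * (g x)\<^sup>2"
    if "x \<in> A" for x
    using assms[OF that] by (auto simp: power_mult_distrib algebra_simps)
  ultimately show ?thesis by (simp cong: sum.cong)
qed

lemma gini_mean_difference_bound:
  fixes A :: "real set" and w :: "real \<Rightarrow> real"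
  assumes fin: "finite A" and nonneg: "\<And>x. x \<in> A \<Longrightarrow> 0 \<le> w x" and total: "sum w A = 1"
  shows "(\<Sum>x\<in>A. \<Sum>y\<in>A. w x * w y * \<bar>x - y\<bar>)\<^sup>2 \<le> 4/3 * (\<Sum>x\<in>A. w x * x\<^sup>2)"
proof -
  define r where "r x = weight_below A w x - weight_above A w x" for x
  have "(\<Sum>x\<in>A. \<Sum>y\<in>A. w x * w y * \<bar>x - y\<bar>)\<^sup>2 = 4 * (\<Sum>x\<in>A. w x * x * r x)\<^sup>2"
    by (simp add: mean_difference_as_rank_sum[OF fin] r_def power2_eq_square)
  also have "\<dots> \<le> 4 * ((\<Sum>x\<in>A. w x * x\<^sup>2) * (\<Sum>x\<in>A. w x * (r x)\<^sup>2))"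
    using weighted_cauchy_schwarz[OF nonneg] by simp
  also have "\<dots> \<le> 4 * ((\<Sum>x\<in>A. w x * x\<^sup>2) * (1/3))"
    using rank_variance_bound[OF fin nonneg total] nonneg
    by (intro mult_left_mono sum_nonneg) (auto simp: r_def)
  finally show ?thesis by simp
qed

definition expect :: "(real \<Rightarrow> real) \<Rightarrow> (real \<Rightarrow> real) \<Rightarrow> real" where
  "expect \<mu> f = (\<Sum>x\<in>supp \<mu>. \<mu> x * f x)"

lemma expect_superset:
  assumes "finite A" "supp \<mu> \<subseteq> A"
  shows "expect \<mu> f = (\<Sum>x\<in>A. \<mu> x * f x)"
  unfolding expect_def
  by (rule sum.mono_neutral_left) (use assms in \<open>auto simp: supp_def\<close>)

lemma expect_add:
  assumes "finite (supp \<mu>)" "finite (supp \<delta>)"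
  shows "expect (\<lambda>x. \<mu> x + \<delta> x) f = expect \<mu> f + expect \<delta> f"
proof -
  define A where "A = supp \<mu> \<union> supp \<delta>"
  have A: "finite A" "supp \<mu> \<subseteq> A" "supp \<delta> \<subseteq> A" "supp (\<lambda>x. \<mu> x + \<delta> x) \<subseteq> A"
    using assms by (auto simp: A_def supp_def)
  have "expect (\<lambda>x. \<mu> x + \<delta> x) f = (\<Sum>x\<in>A. \<mu> x * f x) + (\<Sum>x\<in>A. \<delta> x * f x)"
    unfolding expect_superset[OF A(1,4)] by (simp add: sum.distrib[symmetric] algebra_simps)
  then show ?thesis by (simp add: expect_superset[OF A(1,2)] expect_superset[OF A(1,3)])
qed

lemma expect_mono:
  assumes "distribution \<mu>" "\<And>x. f x \<le> g x"
  shows "expect \<mu> f \<le> expect \<mu> g"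
  unfolding expect_def
  using assms by (intro sum_mono mult_left_mono) (auto simp: distribution_def)

lemma expect_cong:
  assumes "\<And>x. x \<in> supp \<mu> \<Longrightarrow> f x = g x"
  shows "expect \<mu> f = expect \<mu> g"
  unfolding expect_def using assms by simp

(* The sweep at a replaces every atom strictly inside (a, a+1) by masses at a and a+1
   with the same total mass and mean. It is the extremal move on [a, a+1]: by convexity it
   dominates every move supported there (lemma move_dominated_by_sweep). *)
definition inner_atoms :: "real \<Rightarrow> (real \<Rightarrow> real) \<Rightarrow> real set" where
  "inner_atoms a \<nu> = supp \<nu> \<inter> {a<..<a+1}"

definition sweep :: "real \<Rightarrow> (real \<Rightarrow> real) \<Rightarrow> (real \<Rightarrow> real)" where
  "sweep a \<nu> = (\<lambda>x. (if a < x \<and> x < a+1 then 0 else \<nu> x)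
      + (if x = a then (\<Sum>y\<in>inner_atoms a \<nu>. \<nu> y * (a+1-y)) else 0)
      + (if x = a+1 then (\<Sum>y\<in>inner_atoms a \<nu>. \<nu> y * (y-a)) else 0))"

definition chord_gap :: "(real \<Rightarrow> real) \<Rightarrow> real \<Rightarrow> real \<Rightarrow> real" where
  "chord_gap f a x = (a+1-x) * f a + (x-a) * f (a+1) - f x"

lemma supp_sweep: "supp (sweep a \<nu>) \<subseteq> (supp \<nu> - {a<..<a+1}) \<union> {a, a+1}"
  by (auto simp: supp_def sweep_def split: if_splits)

lemma finite_supp_sweep: "finite (supp \<nu>) \<Longrightarrow> finite (supp (sweep a \<nu>))"
  using supp_sweep by (rule finite_subset) auto

lemma expect_sweep:
  assumes fin: "finite (supp \<nu>)"
  shows "expect (sweep a \<nu>) f = expect \<nu> f + (\<Sum>x\<in>inner_atoms a \<nu>. \<nu> x * chord_gap f a x)"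
proof -
  define A where "A = supp \<nu> \<union> {a, a+1}"
  define I where "I = inner_atoms a \<nu>"
  have A: "finite A" "supp \<nu> \<subseteq> A" "supp (sweep a \<nu>) \<subseteq> A" "I \<subseteq> A"
    using fin supp_sweep by (auto simp: A_def I_def inner_atoms_def)
  have I: "{x\<in>A. a < x \<and> x < a+1} = I" by (auto simp: A_def I_def inner_atoms_def)
  have split: "expect (sweep a \<nu>) f = (\<Sum>x\<in>A. \<nu> x * f x)
       - (\<Sum>x\<in>A. if a < x \<and> x < a+1 then \<nu> x * f x else 0)
       + (\<Sum>x\<in>A. if x = a then (\<Sum>y\<in>I. \<nu> y * (a+1-y)) * f x else 0)
       + (\<Sum>x\<in>A. if x = a+1 then (\<Sum>y\<in>I. \<nu> y * (y-a)) * f x else 0)"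
    unfolding expect_superset[OF A(1,3)] sum_subtractf[symmetric] sum.distrib[symmetric]
    by (rule sum.cong) (auto simp: sweep_def I_def algebra_simps)
  have "(\<Sum>x\<in>A. \<nu> x * f x) = expect \<nu> f"
    by (rule expect_superset[OF A(1,2), symmetric])
  moreover have "(\<Sum>x\<in>A. if a < x \<and> x < a+1 then \<nu> x * f x else 0) = (\<Sum>x\<in>I. \<nu> x * f x)"
    by (simp add: sum.inter_filter[OF A(1), symmetric] I)
  moreover have "(\<Sum>x\<in>A. if x = a then (\<Sum>y\<in>I. \<nu> y * (a+1-y)) * f x else 0)
      = (\<Sum>y\<in>I. \<nu> y * (a+1-y)) * f a"
    using A(1) by (simp add: A_def)
  moreover have "(\<Sum>x\<in>A. if x = a+1 then (\<Sum>y\<in>I. \<nu> y * (y-a)) * f x else 0)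
      = (\<Sum>y\<in>I. \<nu> y * (y-a)) * f (a+1)"
    using A(1) by (simp add: A_def)
  moreover have "(\<Sum>x\<in>I. \<nu> x * chord_gap f a x)
      = (\<Sum>y\<in>I. \<nu> y * (a+1-y)) * f a + (\<Sum>y\<in>I. \<nu> y * (y-a)) * f (a+1) - (\<Sum>x\<in>I. \<nu> x * f x)"
    unfolding sum_distrib_right sum_subtractf[symmetric] sum.distrib[symmetric]
    by (rule sum.cong) (auto simp: chord_gap_def algebra_simps)
  ultimately show ?thesis by (simp add: split I_def)
qed

lemma chord_gap_affine:
  assumes "\<And>y. a \<le> y \<Longrightarrow> y \<le> a+1 \<Longrightarrow> f y = c0 + c1 * y" "a \<le> x" "x \<le> a+1"
  shows "chord_gap f a x = 0"
  using assms by (simp add: chord_gap_def algebra_simps)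

lemma expect_sweep_cong:
  assumes "\<And>x. x \<le> a \<or> a+1 \<le> x \<Longrightarrow> f x = g x"
  shows "expect (sweep a \<nu>) f = expect (sweep a \<nu>) g"
  using supp_sweep assms by (intro expect_cong) force

lemma sweep_distribution:
  assumes "distribution \<nu>"
  shows "distribution (sweep a \<nu>)"
proof -
  have nonneg: "\<nu> x \<ge> 0" for x using assms by (simp add: distribution_def)
  have "0 \<le> (\<Sum>y\<in>inner_atoms a \<nu>. \<nu> y * (a+1-y))" "0 \<le> (\<Sum>y\<in>inner_atoms a \<nu>. \<nu> y * (y-a))"
    using nonneg by (auto intro!: sum_nonneg simp: inner_atoms_def)
  then show ?thesis
    using assms finite_supp_sweep nonneg by (auto simp: distribution_def sweep_def)
qed

lemma sweep_total_mass:
  assumes "finite (supp \<nu>)"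
  shows "expect (sweep a \<nu>) (\<lambda>_. 1) = expect \<nu> (\<lambda>_. 1)"
  by (simp add: expect_sweep[OF assms] chord_gap_def algebra_simps)

lemma convex_below_chord:
  fixes \<phi> :: "real \<Rightarrow> real"
  assumes "convex_on UNIV \<phi>" "a \<le> x" "x \<le> a+1"
  shows "\<phi> x \<le> \<phi> a + (\<phi> (a+1) - \<phi> a) * (x - a)"
proof -
  have "convex_on {a..a+1} \<phi>" using assms(1) by (rule convex_on_subset) auto
  from convex_onD_Icc'[OF this] show ?thesis using assms(2,3) by (simp add: algebra_simps)
qed

lemma convex_above_chord_outside:
  fixes \<phi> :: "real \<Rightarrow> real"
  assumes cvx: "convex_on UNIV \<phi>" and out: "x \<le> a \<or> a+1 \<le> x"
  shows "\<phi> a + (\<phi> (a+1) - \<phi> a) * (x - a) \<le> \<phi> x"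
proof (cases "x < a")
  case True
  have "(\<phi> x - \<phi> a) / (x - a) \<le> (\<phi> x - \<phi> (a+1)) / (x - (a+1))"
       "(\<phi> x - \<phi> (a+1)) / (x - (a+1)) \<le> (\<phi> a - \<phi> (a+1)) / (a - (a+1))"
    using convex_on_slope_le[OF cvx, of x "a+1" a] True by auto
  then have "(\<phi> x - \<phi> a) / (x - a) \<le> \<phi> (a+1) - \<phi> a" by simp
  with True have "(\<phi> (a+1) - \<phi> a) * (x - a) \<le> \<phi> x - \<phi> a" by (simp add: divide_le_eq)
  then show ?thesis by simp
next
  case False
  show ?thesis
  proof (cases "x = a")
    case False
    then have "a+1 < x \<or> x = a+1" using \<open>\<not> x < a\<close> out by auto
    moreover have "(\<phi> a - \<phi> (a+1)) / (a - (a+1)) \<le> (\<phi> a - \<phi> x) / (a - x)" if "a+1 < x"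
      using convex_on_slope_le[OF cvx, of a x "a+1"] that by auto
    ultimately show ?thesis by (auto simp: le_divide_eq algebra_simps)
  qed simp
qed

lemma convex_on_max_affine:
  fixes \<phi> :: "real \<Rightarrow> real"
  assumes "convex_on UNIV \<phi>"
  shows "convex_on UNIV (\<lambda>x. max (\<phi> x) (c0 + c1 * x))"
proof (rule convex_onI)
  fix t x y :: real assume t: "0 < t" "t < 1"
  have "\<phi> ((1 - t) *\<^sub>R x + t *\<^sub>R y) \<le> (1 - t) * \<phi> x + t * \<phi> y"
    by (rule convex_onD[OF assms]) (use t in auto)
  moreover have "(1 - t) * \<phi> x + t * \<phi> y \<le> (1 - t) * max (\<phi> x) (c0 + c1 * x) + t * max (\<phi> y) (c0 + c1 * y)"
    and "(1 - t) * (c0 + c1 * x) + t * (c0 + c1 * y)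
           \<le> (1 - t) * max (\<phi> x) (c0 + c1 * x) + t * max (\<phi> y) (c0 + c1 * y)"
    using t by (intro add_mono mult_left_mono; simp)+
  moreover have "c0 + c1 * ((1 - t) *\<^sub>R x + t *\<^sub>R y) = (1 - t) * (c0 + c1 * x) + t * (c0 + c1 * y)"
    by (simp add: algebra_simps)
  ultimately show "max (\<phi> ((1 - t) *\<^sub>R x + t *\<^sub>R y)) (c0 + c1 * ((1 - t) *\<^sub>R x + t *\<^sub>R y))
        \<le> (1 - t) * max (\<phi> x) (c0 + c1 * x) + t * max (\<phi> y) (c0 + c1 * y)"
    by linarith
qed simp

(* A move has zero mass and zero mean, so it does not change the expectation of any
   function that is affine on its interval. *)
lemma move_annihilates_affine:
  assumes "is_move (a, \<delta>)" and "\<And>x. a \<le> x \<Longrightarrow> x \<le> a+1 \<Longrightarrow> g x = c0 + c1 * x"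
  shows "expect \<delta> g = 0"
proof -
  have "supp \<delta> \<subseteq> {a..a+1}" "moment 0 \<delta> = 0" "moment 1 \<delta> = 0"
    using assms(1) by (auto simp: is_move_def)
  moreover from this(1) have "expect \<delta> g = c0 * moment 0 \<delta> + c1 * moment 1 \<delta>"
    unfolding expect_def moment_def sum_distrib_left sum.distrib[symmetric]
    by (intro sum.cong) (use assms(2) in \<open>auto simp: algebra_simps\<close>)
  ultimately show ?thesis by simp
qed

definition convex_dominated :: "(real \<Rightarrow> real) \<Rightarrow> (real \<Rightarrow> real) \<Rightarrow> bool" where
  "convex_dominated \<mu> \<nu> \<longleftrightarrow> (\<forall>\<phi>. convex_on UNIV \<phi> \<longrightarrow> expect \<mu> \<phi> \<le> expect \<nu> \<phi>)"

(* Test with psi = max(phi, chord of phi on [a, a+1]): psi is convex, affine on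
   [a, a+1] (invisible to the move and to the sweep) and equal to phi outside (a, a+1). *)
lemma move_dominated_by_sweep:
  assumes move: "is_move (a, \<delta>)" and applies: "distribution (\<lambda>x. \<mu> x + \<delta> x)"
    and fin_\<mu>: "finite (supp \<mu>)" and fin_\<nu>: "finite (supp \<nu>)" and dom: "convex_dominated \<mu> \<nu>"
  shows "convex_dominated (\<lambda>x. \<mu> x + \<delta> x) (sweep a \<nu>)"
  unfolding convex_dominated_def
proof (intro allI impI)
  fix \<phi> :: "real \<Rightarrow> real" assume cvx: "convex_on UNIV \<phi>"
  have fin_\<delta>: "finite (supp \<delta>)" using move by (simp add: is_move_def signed_distribution_def)
  define c1 where "c1 = \<phi> (a+1) - \<phi> a"
  define c0 where "c0 = \<phi> a - c1 * a"
  define \<psi> where "\<psi> x = max (\<phi> x) (c0 + c1 * x)" for x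
  have chord: "c0 + c1 * x = \<phi> a + (\<phi> (a+1) - \<phi> a) * (x - a)" for x
    by (simp add: c0_def c1_def algebra_simps)
  have \<psi>_inside: "\<psi> x = c0 + c1 * x" if "a \<le> x" "x \<le> a+1" for x
    using convex_below_chord[OF cvx that] unfolding \<psi>_def chord by simp
  have \<psi>_outside: "\<psi> x = \<phi> x" if "x \<le> a \<or> a+1 \<le> x" for x
    using convex_above_chord_outside[OF cvx that] unfolding \<psi>_def chord by simp
  have "expect (\<lambda>x. \<mu> x + \<delta> x) \<phi> \<le> expect (\<lambda>x. \<mu> x + \<delta> x) \<psi>"
    using applies by (rule expect_mono) (simp add: \<psi>_def)
  also have "\<dots> = expect \<mu> \<psi>"
    using expect_add[OF fin_\<mu> fin_\<delta>] move_annihilates_affine[OF move \<psi>_inside] by simp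
  also have "\<dots> \<le> expect \<nu> \<psi>"
  proof -
    have "convex_on UNIV \<psi>" unfolding \<psi>_def by (rule convex_on_max_affine[OF cvx])
    with dom show ?thesis by (simp add: convex_dominated_def)
  qed
  also have "\<dots> = expect (sweep a \<nu>) \<psi>"
    using expect_sweep[OF fin_\<nu>] chord_gap_affine[OF \<psi>_inside]
    by (simp add: inner_atoms_def)
  also have "\<dots> = expect (sweep a \<nu>) \<phi>"
    using \<psi>_outside by (rule expect_sweep_cong)
  finally show "expect (\<lambda>x. \<mu> x + \<delta> x) \<phi> \<le> expect (sweep a \<nu>) \<phi>" .
qed

lemma transforms_distribution:
  assumes "transforms vs \<mu> \<nu>" "distribution \<mu>"
  shows "distribution \<nu>"
  using assms by induction (auto simp: move_applies_def apply_move_def)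

lemma transforms_dominated_by_sweeps:
  assumes "transforms vs \<mu> \<nu>" "distribution \<mu>" "finite (supp \<nu>\<^sub>0)" "convex_dominated \<mu> \<nu>\<^sub>0"
  shows "convex_dominated \<nu> (fold sweep (map fst vs) \<nu>\<^sub>0)"
  using assms
proof (induction arbitrary: \<nu>\<^sub>0 rule: transforms.induct)
  case (Nil \<mu>)
  then show ?case by simp
next
  case (Cons v \<mu> vs \<nu>)
  obtain a \<delta> where v: "v = (a, \<delta>)" by (cases v)
  have step: "apply_move v \<mu> = (\<lambda>x. \<mu> x + \<delta> x)" "distribution (\<lambda>x. \<mu> x + \<delta> x)"
    using Cons.hyps(2) by (simp_all add: apply_move_def move_applies_def v)
  have "convex_dominated (\<lambda>x. \<mu> x + \<delta> x) (sweep a \<nu>\<^sub>0)"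
    using move_dominated_by_sweep Cons.hyps(1) Cons.prems step(2)
    by (auto simp: distribution_def v)
  then show ?case
    using Cons.IH step finite_supp_sweep[OF Cons.prems(2)] by (simp add: v)
qed

definition second_moment :: "(real \<Rightarrow> real) \<Rightarrow> real" where
  "second_moment \<nu> = expect \<nu> (\<lambda>x. x\<^sup>2)"

definition spread :: "(real \<Rightarrow> real) \<Rightarrow> real" where
  "spread \<nu> = expect \<nu> (\<lambda>x. expect \<nu> (\<lambda>y. \<bar>x - y\<bar>))"

(* The chord gap of x^2 at x is (x - a)(1 - (x - a)). *)
lemma sweep_second_moment:
  assumes "finite (supp \<nu>)"
  shows "second_moment (sweep a \<nu>)
           = second_moment \<nu> + (\<Sum>x\<in>inner_atoms a \<nu>. \<nu> x * ((x - a) * (1 - (x - a))))"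
  unfolding second_moment_def expect_sweep[OF assms]
  by (simp add: chord_gap_def power2_eq_square algebra_simps)

lemma chord_gap_distance:
  fixes a x y :: real
  assumes "a \<le> x" "x \<le> a+1"
  shows "chord_gap (\<lambda>z. \<bar>z - y\<bar>) a x
           = (if a < y \<and> y < a+1 then 2 * (min (x - a) (y - a) - (x - a) * (y - a)) else 0)"
  using assms by (auto simp: chord_gap_def abs_if min_def algebra_simps)

(* The chord gap is linear, so it commutes with taking expectations in a second variable. *)
lemma chord_gap_expect:
  "chord_gap (\<lambda>z. expect \<nu> (\<lambda>y. k z y)) a x = expect \<nu> (\<lambda>y. chord_gap (\<lambda>z. k z y) a x)"
  by (simp add: chord_gap_def expect_def sum_distrib_left sum_subtractf[symmetric]
        sum.distrib[symmetric] algebra_simps)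

lemma sweep_spread:
  assumes fin: "finite (supp \<nu>)"
  shows "spread (sweep a \<nu>) = spread \<nu> + 2 * (\<Sum>x\<in>inner_atoms a \<nu>. \<Sum>y\<in>inner_atoms a \<nu>.
           \<nu> x * \<nu> y * (min (x - a) (y - a) - (x - a) * (y - a)))"
proof -
  define I where "I = inner_atoms a \<nu>"
  define K where "K x y = min (x - a) (y - a) - (x - a) * (y - a)" for x y
  have outer: "expect (sweep a \<nu>) (\<lambda>y. \<bar>z - y\<bar>) = expect \<nu> (\<lambda>y. \<bar>z - y\<bar>)"
    if "z \<le> a \<or> a+1 \<le> z" for z
  proof -
    have "chord_gap (\<lambda>y. \<bar>z - y\<bar>) a y = 0" if "y \<in> I" for y
      using \<open>z \<le> a \<or> a+1 \<le> z\<close> that chord_gap_distance[of a y z]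
      by (auto simp: I_def inner_atoms_def chord_gap_def abs_minus_commute)
    then show ?thesis by (simp add: expect_sweep[OF fin] I_def)
  qed
  have gap: "chord_gap (\<lambda>z. expect \<nu> (\<lambda>y. \<bar>z - y\<bar>)) a x = (\<Sum>y\<in>I. \<nu> y * (2 * K x y))"
    if "x \<in> I" for x
  proof -
    have "chord_gap (\<lambda>z. expect \<nu> (\<lambda>y. \<bar>z - y\<bar>)) a x
        = (\<Sum>y\<in>supp \<nu>. \<nu> y * (if y \<in> {a<..<a+1} then 2 * K x y else 0))"
      unfolding chord_gap_expect K_def using that chord_gap_distance[of a x]
      by (simp add: expect_def I_def inner_atoms_def K_def)
    also have "\<dots> = (\<Sum>y\<in>supp \<nu>. if y \<in> {a<..<a+1} then \<nu> y * (2 * K x y) else 0)"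
      by (intro sum.cong) auto
    also have "\<dots> = (\<Sum>y\<in>I. \<nu> y * (2 * K x y))"
      by (simp add: sum.inter_filter[OF fin, symmetric] I_def inner_atoms_def Int_def)
    finally show ?thesis .
  qed
  have "spread (sweep a \<nu>) = expect (sweep a \<nu>) (\<lambda>z. expect \<nu> (\<lambda>y. \<bar>z - y\<bar>))"
    unfolding spread_def using outer by (rule expect_sweep_cong)
  also have "\<dots> = spread \<nu> + (\<Sum>x\<in>I. \<nu> x * (\<Sum>y\<in>I. \<nu> y * (2 * K x y)))"
    by (simp add: expect_sweep[OF fin] spread_def gap I_def)
  finally show ?thesis
    by (simp add: I_def K_def sum_distrib_left algebra_simps)
qed

lemma sweep_increment_bound:
  assumes fin: "finite (supp \<nu>)"
  shows "6 * (second_moment (sweep a \<nu>) - second_moment \<nu>)\<^sup>2 \<le> spread (sweep a \<nu>) - spread \<nu>"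
proof -
  have "finite (inner_atoms a \<nu>)" using fin by (simp add: inner_atoms_def)
  then have "3 * (\<Sum>x\<in>inner_atoms a \<nu>. \<nu> x * ((x - a) * (1 - (x - a))))\<^sup>2
      \<le> (\<Sum>x\<in>inner_atoms a \<nu>. \<Sum>y\<in>inner_atoms a \<nu>.
            \<nu> x * \<nu> y * (min (x - a) (y - a) - (x - a) * (y - a)))"
    by (rule min_kernel_quadratic_form_bound) (auto simp: inner_atoms_def)
  then show ?thesis by (simp add: sweep_second_moment[OF fin] sweep_spread[OF fin])
qed

(* Inductive step of the Cauchy-Schwarz accumulation over a sequence of sweeps. *)
lemma square_of_sum_step:
  fixes x y X Y k :: real
  assumes "x\<^sup>2 \<le> k * X" "y\<^sup>2 \<le> Y" "0 \<le> X" "0 \<le> k"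
  shows "(x + y)\<^sup>2 \<le> (k + 1) * (X + Y)"
proof (cases "k = 0")
  case True
  then show ?thesis using assms by simp
next
  case False
  then have k: "0 < k" using assms by simp
  have "k * (x + y)\<^sup>2 \<le> (k + 1) * (x\<^sup>2 + k * y\<^sup>2)"
    using zero_le_power2[of "x - k * y"] by (simp add: power2_eq_square algebra_simps)
  also have "\<dots> \<le> (k + 1) * (k * X + k * Y)"
    using assms k by (intro mult_left_mono add_mono) auto
  also have "\<dots> = k * ((k + 1) * (X + Y))" by (simp add: algebra_simps)
  finally show ?thesis using k by simp
qed

lemma sweeps_growth:
  assumes "finite (supp \<nu>)"
  shows "6 * (second_moment (fold sweep as \<nu>) - second_moment \<nu>)\<^sup>2
           \<le> real (length as) * (spread (fold sweep as \<nu>) - spread \<nu>)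
         \<and> spread \<nu> \<le> spread (fold sweep as \<nu>)"
  using assms
proof (induction as arbitrary: \<nu>)
  case Nil
  then show ?case by simp
next
  case (Cons a as)
  define \<nu>' where "\<nu>' = sweep a \<nu>"
  define \<omega> where "\<omega> = fold sweep as \<nu>'"
  have IH: "6 * (second_moment \<omega> - second_moment \<nu>')\<^sup>2 \<le> real (length as) * (spread \<omega> - spread \<nu>')"
      "spread \<nu>' \<le> spread \<omega>"
    using Cons.IH[OF finite_supp_sweep[OF Cons.prems]] by (auto simp: \<nu>'_def \<omega>_def)
  have step: "6 * (second_moment \<nu>' - second_moment \<nu>)\<^sup>2 \<le> spread \<nu>' - spread \<nu>"
    unfolding \<nu>'_def by (rule sweep_increment_bound[OF Cons.prems])
  have "((second_moment \<omega> - second_moment \<nu>') + (second_moment \<nu>' - second_moment \<nu>))\<^sup>2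
      \<le> (real (length as) + 1) * ((spread \<omega> - spread \<nu>') / 6 + (spread \<nu>' - spread \<nu>) / 6)"
    by (rule square_of_sum_step) (use IH step in auto)
  then have "6 * (second_moment \<omega> - second_moment \<nu>)\<^sup>2
      \<le> real (length (a # as)) * (spread \<omega> - spread \<nu>)"
    by (simp add: field_simps)
  moreover have "spread \<nu> \<le> spread \<nu>'"
    using step zero_le_power2[of "second_moment \<nu>' - second_moment \<nu>"] by linarith
  moreover have "fold sweep (a # as) \<nu> = \<omega>" by (simp add: \<nu>'_def \<omega>_def)
  ultimately show ?case using IH(2) by simp
qed

lemma sweeps_distribution:
  assumes "distribution \<nu>"
  shows "distribution (fold sweep as \<nu>) \<and> expect (fold sweep as \<nu>) (\<lambda>_. 1) = expect \<nu> (\<lambda>_. 1)"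
  using assms
proof (induction as arbitrary: \<nu>)
  case (Cons a as)
  then show ?case
    using sweep_distribution sweep_total_mass by (simp add: distribution_def)
qed simp

lemma second_moment_chebyshev:
  assumes dist: "distribution \<nu>" and tail: "mass \<nu> {x. \<bar>x\<bar> \<ge> d} \<ge> p" and "d > 0"
  shows "p * d\<^sup>2 \<le> second_moment \<nu>"
proof -
  have nonneg: "\<And>x. \<nu> x \<ge> 0" and fin: "finite (supp \<nu>)"
    using dist by (auto simp: distribution_def)
  define T where "T = supp \<nu> \<inter> {x. \<bar>x\<bar> \<ge> d}"
  have "p * d\<^sup>2 \<le> (\<Sum>x\<in>T. \<nu> x) * d\<^sup>2"
    using tail by (intro mult_right_mono) (auto simp: mass_def T_def)
  also have "\<dots> = (\<Sum>x\<in>T. \<nu> x * d\<^sup>2)" by (simp add: sum_distrib_right)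
  also have "\<dots> \<le> (\<Sum>x\<in>T. \<nu> x * x\<^sup>2)"
  proof (rule sum_mono)
    fix x assume "x \<in> T"
    then have "d\<^sup>2 \<le> x\<^sup>2" using \<open>d > 0\<close> by (simp add: T_def abs_le_square_iff[symmetric])
    then show "\<nu> x * d\<^sup>2 \<le> \<nu> x * x\<^sup>2" using nonneg by (intro mult_left_mono) auto
  qed
  also have "\<dots> \<le> (\<Sum>x\<in>supp \<nu>. \<nu> x * x\<^sup>2)"
    using fin nonneg by (intro sum_mono2) (auto simp: T_def)
  finally show ?thesis by (simp add: second_moment_def expect_def)
qed

lemma spread_squared_bound:
  assumes dist: "distribution \<nu>" and total: "expect \<nu> (\<lambda>_. 1) = 1"
  shows "(spread \<nu>)\<^sup>2 \<le> 4/3 * second_moment \<nu>" and "0 \<le> spread \<nu>"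
proof -
  have fin: "finite (supp \<nu>)" and nonneg: "\<And>x. 0 \<le> \<nu> x"
    using dist by (auto simp: distribution_def)
  have double_sum: "spread \<nu> = (\<Sum>x\<in>supp \<nu>. \<Sum>y\<in>supp \<nu>. \<nu> x * \<nu> y * \<bar>x - y\<bar>)"
    by (simp add: spread_def expect_def sum_distrib_left algebra_simps)
  show "(spread \<nu>)\<^sup>2 \<le> 4/3 * second_moment \<nu>"
    unfolding double_sum second_moment_def expect_def
    using total by (intro gini_mean_difference_bound fin nonneg) (simp add: expect_def)
  show "0 \<le> spread \<nu>"
    unfolding double_sum using nonneg by (intro sum_nonneg mult_nonneg_nonneg) auto
qed

lemma count_bound_from_moments:
  fixes M S n :: real
  assumes growth: "6 * M\<^sup>2 \<le> n * S" and gini: "S\<^sup>2 \<le> 4/3 * M" and "0 \<le> S" "0 < M"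
  shows "3 * sqrt 3 * (M * sqrt M) \<le> n"
proof -
  define r where "r = sqrt M"
  have r: "0 < r" "M = r\<^sup>2" using \<open>0 < M\<close> by (simp_all add: r_def)
  have "S \<le> sqrt (4/3 * M)" using gini \<open>0 \<le> S\<close> real_le_rsqrt by blast
  also have "\<dots> = 2 * r / sqrt 3" by (simp add: r_def real_sqrt_mult real_sqrt_divide)
  finally have S: "S \<le> 2 * r / sqrt 3" .
  have "0 < n * S" using growth \<open>0 < M\<close> zero_less_power[of M 2] by linarith
  then have "0 \<le> n" using \<open>0 \<le> S\<close> by (simp add: zero_less_mult_iff)
  then have "6 * M\<^sup>2 \<le> n * (2 * r / sqrt 3)"
    using growth mult_left_mono[OF S \<open>0 \<le> n\<close>] by linarith
  then have "6 * r ^ 4 \<le> n * (2 * r / sqrt 3)"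
    by (simp add: r(2) power2_eq_square power4_eq_xxxx)
  then have "sqrt 3 / 2 * (6 * r ^ 4) \<le> sqrt 3 / 2 * (n * (2 * r / sqrt 3))"
    by (rule mult_left_mono) simp
  then have "r * (3 * sqrt 3 * r ^ 3) \<le> r * n"
    by (simp add: power4_eq_xxxx power3_eq_cube algebra_simps)
  then have "3 * sqrt 3 * r ^ 3 \<le> n" using r(1) by simp
  moreover have "M * sqrt M = r ^ 3"
    using r(1) unfolding r_def[symmetric] r(2) by (simp add: power3_eq_cube power2_eq_square)
  ultimately show ?thesis by simp
qed

lemma three_halves_power_lower_bound:
  fixes p d M :: real
  assumes "0 < p" "0 < d" "p * d\<^sup>2 \<le> M"
  shows "(3 * p) powr (3/2) * d ^ 3 \<le> 3 * sqrt 3 * (M * sqrt M)"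
proof -
  have "(3 * p) powr (3/2) = (3 * p) powr (1 + 1/2)" by simp
  also have "\<dots> = (3 * p) powr 1 * (3 * p) powr (1/2)" by (rule powr_add)
  also have "\<dots> = 3 * p * (sqrt 3 * sqrt p)"
    using assms by (simp add: powr_half_sqrt real_sqrt_mult)
  finally have "(3 * p) powr (3/2) * d ^ 3 = 3 * sqrt 3 * ((p * d\<^sup>2) * sqrt (p * d\<^sup>2))"
    using assms by (simp add: real_sqrt_mult power2_eq_square power3_eq_cube algebra_simps)
  also have "\<dots> \<le> 3 * sqrt 3 * (M * sqrt M)"
  proof -
    have "0 < p * d\<^sup>2" using assms by simp
    moreover have "sqrt (p * d\<^sup>2) \<le> sqrt M" using assms(3) by simp
    ultimately have "(p * d\<^sup>2) * sqrt (p * d\<^sup>2) \<le> M * sqrt M"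
      using assms(3) by (intro mult_mono) auto
    then show ?thesis by simp
  qed
  finally show ?thesis .
qed

theorem mainTheorem13:
  fixes d p :: real and vs :: "move list" and \<nu> :: "real \<Rightarrow> real"
  assumes "d > 0" and "0 < p" and "p < 1"
    and "transforms vs unit_at_zero \<nu>"
    and "mass \<nu> {x. \<bar>x\<bar> \<ge> d} \<ge> p"
  shows "real (length vs) \<ge> (3 * p) powr (3/2) * d ^ 3"
proof -
  have supp_unit: "supp unit_at_zero = {0}" by (auto simp: supp_def unit_at_zero_def)
  have unit: "distribution unit_at_zero" "expect unit_at_zero (\<lambda>_. 1) = 1"
    "second_moment unit_at_zero = 0" "spread unit_at_zero = 0"
    using supp_unit
    by (auto simp: distribution_def unit_at_zero_def expect_def second_moment_def spread_def)
  define E where "E = fold sweep (map fst vs) unit_at_zero"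
  have "convex_dominated \<nu> E"
    unfolding E_def using assms(4) unit(1) supp_unit
    by (intro transforms_dominated_by_sweeps) (auto simp: convex_dominated_def)
  then have "second_moment \<nu> \<le> second_moment E"
    using convex_power2 by (simp add: convex_dominated_def second_moment_def)
  moreover have "p * d\<^sup>2 \<le> second_moment \<nu>"
    using transforms_distribution[OF assms(4) unit(1)] assms(5,1) by (rule second_moment_chebyshev)
  ultimately have tail: "p * d\<^sup>2 \<le> second_moment E" by simp
  have growth: "6 * (second_moment E)\<^sup>2 \<le> real (length vs) * spread E"
    using sweeps_growth[of unit_at_zero "map fst vs"] supp_unit unit by (simp add: E_def)
  have E: "distribution E" "expect E (\<lambda>_. 1) = 1"
    using sweeps_distribution[OF unit(1)] unit(2) by (simp_all add: E_def)
  have "3 * sqrt 3 * (second_moment E * sqrt (second_moment E)) \<le> real (length vs)"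
    using growth spread_squared_bound[OF E] tail assms(1,2)
    by (intro count_bound_from_moments) (auto intro: less_le_trans[rotated])
  with three_halves_power_lower_bound[OF assms(2,1) tail] show ?thesis by linarith
qed

end
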